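(* If $(\lambda,\mu,\nu)$ is a low triple, then $\mathrm{ht}_0^+(\lambda+\mu-\nu)\le2$.
   Context: $\Phi$ is an irreducible reduced root system with basis $\alpha_1,\dots,\alpha_\ell$ numbered as in Bourbaki, fundamental weights $\omega_1,\dots,\omega_\ell$ dual to the simple coroots, weight lattice $\Lambda$, dominant weights $\Lambda^+$; $\mu\le\lambda$ iff $\lambda-\mu$ is a nonnegative integer combination of simple roots. A triple $(\lambda,\mu,\nu)$ of dominant weights is a low triple if (i) whenever $\lambda',\mu'\in\Lambda^+$ with $\lambda'\le\lambda$, $\mu'\le\mu$, $\nu\le\lambda'+\mu'$, then $\lambda'=\lambda$, $\mu'=\mu$; and (ii) $\nu+\sum_{i=1}^\ell\alpha_i\le\lambda+\mu$. Let $I_0\subset\{1,\dots,\ell\}$ be the largest connected set of nodes of the Dynkin diagram containing node $1$ whose subdiagram has only simple edges. For a weight $\lambda=\sum_i a_i\omega_i$ define $\mathrm{ht}_0^+(\lambda)=\sum_{i\in I_0,\,a_i>0}a_i$ if $\Phi$ is not of type $\mathsf F_4$, and, if $\Phi$ is of type $\mathsf F_4$, $\mathrm{ht}_0^+(\lambda)=\max\big(\sum_{i\in\{1,2\},a_i>0}a_i,\ \sum_{i\in\{3,4\},a_i>0}a_i\big)$. *)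

theory Defs
  imports Main "HOL-Library.Function_Algebras"
begin

text \<open>Irreducible reduced root systems, up to isomorphism, are classified by their
Cartan type.  We encode the type together with the Bourbaki numbering of the simple roots.\<close>

datatype cartan_type = TA nat | TB nat | TC nat | TD nat | TE nat | TF4 | TG2

definition valid_type :: "cartan_type \<Rightarrow> bool" where
  "valid_type X = (case X of
      TA n \<Rightarrow> n \<ge> 1 | TB n \<Rightarrow> n \<ge> 2 | TC n \<Rightarrow> n \<ge> 2 | TD n \<Rightarrow> n \<ge> 4
    | TE n \<Rightarrow> n \<in> {6,7,8} | TF4 \<Rightarrow> True | TG2 \<Rightarrow> True)"

definition rank :: "cartan_type \<Rightarrow> nat" where
  "rank X = (case X of
      TA n \<Rightarrow> n | TB n \<Rightarrow> n | TC n \<Rightarrow> n | TD n \<Rightarrow> n | TE n \<Rightarrow> n | TF4 \<Rightarrow> 4 | TG2 \<Rightarrow> 2)"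

definition nodes :: "cartan_type \<Rightarrow> nat set" where
  "nodes X = {1..rank X}"

definition dynkin_edge :: "cartan_type \<Rightarrow> nat \<Rightarrow> nat \<Rightarrow> bool" where
  "dynkin_edge X i j = (i \<in> nodes X \<and> j \<in> nodes X \<and> (case X of
      TA n \<Rightarrow> i + 1 = j \<or> j + 1 = i
    | TB n \<Rightarrow> i + 1 = j \<or> j + 1 = i
    | TC n \<Rightarrow> i + 1 = j \<or> j + 1 = i
    | TD n \<Rightarrow> ((i + 1 = j \<or> j + 1 = i) \<and> i \<le> n - 1 \<and> j \<le> n - 1)
              \<or> {i, j} = {n - 2, n}
    | TE n \<Rightarrow> {i, j} \<in> {{1,3},{3,4},{4,5},{5,6},{6,7},{7,8},{2,4}}
    | TF4 \<Rightarrow> i + 1 = j \<or> j + 1 = i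
    | TG2 \<Rightarrow> {i, j} = {1, 2}))"

text \<open>Cartan integers: cartan X i j is the pairing of alpha_j with the coroot of alpha_i, i.e. the
\<open>\<omega>_i\<close>-coordinate of the simple root \<open>\<alpha>_j\<close>.\<close>
definition cartan :: "cartan_type \<Rightarrow> nat \<Rightarrow> nat \<Rightarrow> int" where
  "cartan X i j =
    (if i \<in> nodes X \<and> j \<in> nodes X \<and> i = j then 2
     else if dynkin_edge X i j then
       (case X of
          TB n \<Rightarrow> (if i = n \<and> j = n - 1 then -2 else -1)
        | TC n \<Rightarrow> (if i = n - 1 \<and> j = n then -2 else -1)
        | TF4 \<Rightarrow> (if i = 3 \<and> j = 2 then -2 else -1)
        | TG2 \<Rightarrow> (if i = 1 \<and> j = 2 then -3 else -1)
        | _ \<Rightarrow> -1)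
     else 0)"

text \<open>Weights are written in the basis of fundamental weights: a weight is a function
\<open>nat \<Rightarrow> int\<close> supported on the nodes \<open>{1..\<ell>}\<close>.\<close>
definition weights :: "cartan_type \<Rightarrow> (nat \<Rightarrow> int) set" where
  "weights X = {f. \<forall>i. i \<notin> nodes X \<longrightarrow> f i = 0}"

definition dominant :: "cartan_type \<Rightarrow> (nat \<Rightarrow> int) set" where
  "dominant X = {f \<in> weights X. \<forall>i \<in> nodes X. f i \<ge> 0}"

definition simple_root :: "cartan_type \<Rightarrow> nat \<Rightarrow> nat \<Rightarrow> int" where
  "simple_root X j = (\<lambda>i. if i \<in> nodes X then cartan X i j else 0)"

definition sum_simple_roots :: "cartan_type \<Rightarrow> nat \<Rightarrow> int" where
  "sum_simple_roots X = (\<lambda>i. \<Sum>j\<in>nodes X. simple_root X j i)"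

definition wle :: "cartan_type \<Rightarrow> (nat \<Rightarrow> int) \<Rightarrow> (nat \<Rightarrow> int) \<Rightarrow> bool" where
  "wle X mu la = (\<exists>c :: nat \<Rightarrow> nat.
      la - mu = (\<lambda>i. \<Sum>j\<in>nodes X. int (c j) * simple_root X j i))"

definition low_triple :: "cartan_type \<Rightarrow> (nat \<Rightarrow> int) \<Rightarrow> (nat \<Rightarrow> int) \<Rightarrow> (nat \<Rightarrow> int) \<Rightarrow> bool" where
  "low_triple X la mu nu =
    (la \<in> dominant X \<and> mu \<in> dominant X \<and> nu \<in> dominant X \<and>
     (\<forall>la' \<in> dominant X. \<forall>mu' \<in> dominant X.
        wle X la' la \<and> wle X mu' mu \<and> wle X nu (la' + mu') \<longrightarrow> la' = la \<and> mu' = mu) \<and>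
     wle X (nu + sum_simple_roots X) (la + mu))"

definition simple_edge :: "cartan_type \<Rightarrow> nat \<Rightarrow> nat \<Rightarrow> bool" where
  "simple_edge X i j = (dynkin_edge X i j \<and> cartan X i j * cartan X j i = 1)"

text \<open>\<open>I_0\<close>: the nodes reachable from node 1 via simple edges. Since Dynkin diagrams
are trees, this is the largest connected set of nodes containing 1 whose subdiagram has
only simple edges.\<close>
definition I0 :: "cartan_type \<Rightarrow> nat set" where
  "I0 X = {i \<in> nodes X. (1, i) \<in> {(a, b). simple_edge X a b}\<^sup>*}"

definition ht0plus :: "cartan_type \<Rightarrow> (nat \<Rightarrow> int) \<Rightarrow> int" where
  "ht0plus X f =
    (if X = TF4 then
       max (\<Sum>i\<in>{i \<in> {1,2}. f i > 0}. f i) (\<Sum>i\<in>{i \<in> {3,4}. f i > 0}. f i)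
     else (\<Sum>i\<in>{i \<in> I0 X. f i > 0}. f i))"

end

theory Submission
  imports Defs
begin

text \<open>For \<open>S\<close> a set of nodes write \<open>\<alpha>_S = \<Sum>\<^sub>j\<^sub>\<in>\<^sub>S \<alpha>_j\<close>. Condition (ii) leaves room to subtract any
\<open>\<alpha>_S\<close> from \<open>\<lambda>\<close> (or from \<open>\<mu>\<close>) while keeping \<open>\<nu>\<close> below the sum, so by (i) no dominant weight
\<open>\<lambda> - \<alpha>_S\<close> with \<open>\<alpha>_S \<noteq> 0\<close> exists. With \<open>S = {q}\<close> this gives \<open>\<lambda>_q \<le> 1\<close>. If \<open>\<lambda>_i, \<lambda>_j \<ge> 1\<close> for
distinct nodes \<open>i, j\<close> joined by simple edges, let \<open>S\<close> be the nodes of a shortest such path.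
All bonds inside \<open>S\<close> are then simple, so \<open>\<langle>\<alpha>_S, \<alpha>_q\<^sup>\<or>\<rangle>\<close> is \<open>2\<close> minus the number of neighbours of \<open>q\<close>
in \<open>S\<close>: it is \<open>1\<close> at \<open>i\<close>, at most \<open>1\<close> at \<open>j\<close> and at most \<open>0\<close> elsewhere, so \<open>\<lambda> - \<alpha>_S\<close> is dominant,
a contradiction. Hence on a connected simply-laced set of nodes \<open>\<lambda>\<close> and \<open>\<mu>\<close> each have
coordinate sum at most \<open>1\<close>, and \<open>\<nu> \<ge> 0\<close> bounds the positive part of \<open>\<lambda> + \<mu> - \<nu>\<close> there by \<open>2\<close>.\<close>

section \<open>Walks in a graph\<close>

definition walk :: "('a \<Rightarrow> 'a \<Rightarrow> bool) \<Rightarrow> 'a \<Rightarrow> 'a \<Rightarrow> 'a list \<Rightarrow> bool" where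
  "walk r x y vs \<longleftrightarrow> vs \<noteq> [] \<and> hd vs = x \<and> last vs = y \<and> successively r vs"

definition shortest_walk :: "('a \<Rightarrow> 'a \<Rightarrow> bool) \<Rightarrow> 'a \<Rightarrow> 'a \<Rightarrow> 'a list \<Rightarrow> bool" where
  "shortest_walk r x y vs \<longleftrightarrow> walk r x y vs \<and> (\<forall>ws. walk r x y ws \<longrightarrow> length vs \<le> length ws)"

lemma rtranclp_imp_walk: "r\<^sup>*\<^sup>* x y \<Longrightarrow> \<exists>vs. walk r x y vs"
proof (induction rule: rtranclp_induct)
  case base
  show ?case by (rule exI[of _ "[x]"]) (simp add: walk_def)
next
  case (step y z)
  then obtain vs where "walk r x y vs" by blast
  with step.hyps(2) have "walk r x z (vs @ [z])"
    by (auto simp: walk_def successively_append_iff)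
  then show ?case by blast
qed

lemma shortest_walk_exists: "r\<^sup>*\<^sup>* x y \<Longrightarrow> \<exists>vs. shortest_walk r x y vs"
  using rtranclp_imp_walk ex_has_least_nat[of "walk r x y" _ length]
  unfolding shortest_walk_def by metis

lemma successively_rtranclp: "successively r vs \<Longrightarrow> v \<in> set vs \<Longrightarrow> r\<^sup>*\<^sup>* (hd vs) v"
  by (induction r vs rule: successively.induct) (auto intro: converse_rtranclp_into_rtranclp)

lemma shortest_walk_distinct:
  assumes "shortest_walk r x y vs"
  shows "distinct vs"
proof (rule ccontr)
  assume "\<not> distinct vs"
  then obtain as u bs cs where vs: "vs = as @ u # bs @ u # cs"
    using not_distinct_decomp by fastforce
  have walk: "walk r x y vs" and shortest: "\<And>ws. walk r x y ws \<Longrightarrow> length vs \<le> length ws"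
    using assms unfolding shortest_walk_def by auto
  have "successively r ((as @ [u]) @ (bs @ u # cs))" "successively r ((as @ u # bs) @ (u # cs))"
    using walk unfolding walk_def vs by simp_all
  then have "successively r (as @ [u])" "successively r (u # cs)"
    by (simp_all only: successively_append_iff)
  then have "walk r x y (as @ u # cs)"
    using walk unfolding walk_def vs by (auto simp: successively_append_iff hd_append)
  then show False using shortest[of "as @ u # cs"] unfolding vs by simp
qed

lemma shortest_walk_start_neighbours:
  assumes "irreflp r" "shortest_walk r x y vs" "x \<noteq> y"
  shows "{v \<in> set vs. r x v} = {hd (tl vs)}"
proof -
  have walk: "walk r x y vs" and shortest: "\<And>ws. walk r x y ws \<Longrightarrow> length vs \<le> length ws"
    using assms(2) unfolding shortest_walk_def by auto
  obtain ws where vs: "vs = x # ws"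
    using walk unfolding walk_def by (cases vs) auto
  have "ws \<noteq> []" using walk assms(3) unfolding walk_def vs by auto
  then have first: "r x (hd ws)" and ws: "successively r ws" "last ws = y"
    using walk unfolding walk_def vs by (auto simp: successively_Cons)
  have "v = hd ws" if "v \<in> set vs" "r x v" for v
  proof -
    have "v \<in> set ws" using that assms(1) vs by (auto simp: irreflp_def)
    then obtain as bs where ws_split: "ws = as @ v # bs" by (meson split_list)
    have "walk r x y (x # v # bs)"
      using ws \<open>r x v\<close> unfolding walk_def ws_split by (auto simp: successively_append_iff)
    then have "as = []" using shortest[of "x # v # bs"] unfolding vs ws_split by simp
    then show ?thesis using ws_split by simp
  qed
  then show ?thesis using first \<open>ws \<noteq> []\<close> vs by auto
qed

lemma walk_end_neighbour:
  assumes "symp r" "walk r x y vs" "x \<noteq> y"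
  shows "1 \<le> card {v \<in> set vs. r y v}"
proof -
  define us where "us = butlast vs"
  have vs: "vs = us @ [y]"
    using assms(2) unfolding walk_def us_def by (metis append_butlast_last_id)
  have "us \<noteq> []" using assms(2,3) unfolding walk_def vs by auto
  then have "r (last us) y"
    using assms(2) unfolding walk_def vs by (auto simp: successively_append_iff)
  then have "last us \<in> {v \<in> set vs. r y v}"
    using assms(1) vs \<open>us \<noteq> []\<close> by (auto dest: sympD)
  then show ?thesis by (auto simp: Suc_le_eq card_gt_0_iff)
qed

lemma distinct_walk_inner_neighbours:
  assumes "symp r" "walk r x y vs" "distinct vs" "v \<in> set vs" "v \<noteq> x" "v \<noteq> y"
  shows "2 \<le> card {u \<in> set vs. r v u}"
proof -
  obtain us ws where vs: "vs = us @ v # ws" using assms(4) by (meson split_list)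
  have "us \<noteq> []" "ws \<noteq> []" using assms(2,5,6) unfolding walk_def vs by auto
  have "successively r (us @ v # ws)" using assms(2) unfolding walk_def vs by simp
  then have "r (last us) v" "r v (hd ws)"
    using \<open>us \<noteq> []\<close> \<open>ws \<noteq> []\<close> by (simp_all add: successively_append_iff successively_Cons)
  moreover have "last us \<noteq> hd ws"
    using assms(3) last_in_set[OF \<open>us \<noteq> []\<close>] hd_in_set[OF \<open>ws \<noteq> []\<close>] unfolding vs by auto
  ultimately have "{last us, hd ws} \<subseteq> {u \<in> set vs. r v u}" "card {last us, hd ws} = 2"
    using assms(1) \<open>us \<noteq> []\<close> \<open>ws \<noteq> []\<close> unfolding vs by (auto dest: sympD)
  then show ?thesis
    using card_mono[of "{u \<in> set vs. r v u}" "{last us, hd ws}"] by simp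
qed

section \<open>Simple edges of Dynkin diagrams\<close>

lemma dynkin_edge_sym: "dynkin_edge X a b \<longleftrightarrow> dynkin_edge X b a"
  unfolding dynkin_edge_def by (cases X) (auto simp: insert_commute)

lemma dynkin_edge_irrefl: "\<not> dynkin_edge X a a"
  unfolding dynkin_edge_def nodes_def by (cases X) (auto simp: doubleton_eq_iff)

lemma dynkin_edge_nodes: "dynkin_edge X a b \<Longrightarrow> a \<in> nodes X \<and> b \<in> nodes X"
  unfolding dynkin_edge_def by auto

lemma cartan_self: "a \<in> nodes X \<Longrightarrow> cartan X a a = 2"
  unfolding cartan_def by simp

lemma cartan_nonpos: "a \<noteq> b \<Longrightarrow> cartan X a b \<le> 0"
  unfolding cartan_def by (cases X) auto

lemma cartan_eq_0_if_not_dynkin_edge: "a \<noteq> b \<Longrightarrow> \<not> dynkin_edge X a b \<Longrightarrow> cartan X a b = 0"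
  unfolding cartan_def by simp

lemma cartan_dynkin_edge:
  assumes "dynkin_edge X a b"
  shows "cartan X a b =
       (case X of
          TB n \<Rightarrow> (if a = n \<and> b = n - 1 then -2 else -1)
        | TC n \<Rightarrow> (if a = n - 1 \<and> b = n then -2 else -1)
        | TF4 \<Rightarrow> (if a = 3 \<and> b = 2 then -2 else -1)
        | TG2 \<Rightarrow> (if a = 1 \<and> b = 2 then -3 else -1)
        | _ \<Rightarrow> -1)"
  using assms dynkin_edge_irrefl unfolding cartan_def by metis

lemma symp_simple_edge: "symp (simple_edge X)"
  unfolding simple_edge_def by (auto intro: sympI simp: dynkin_edge_sym mult.commute)

lemma irreflp_simple_edge: "irreflp (simple_edge X)"
  unfolding simple_edge_def by (simp add: irreflpI dynkin_edge_irrefl)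

lemma simple_edge_nodes: "simple_edge X a b \<Longrightarrow> a \<in> nodes X \<and> b \<in> nodes X"
  unfolding simple_edge_def using dynkin_edge_nodes by blast

lemma cartan_simple_edge:
  assumes "simple_edge X a b"
  shows "cartan X a b = -1"
proof -
  have "a \<noteq> b" using assms irreflp_simple_edge by (metis irreflpD)
  then have "cartan X a b \<le> 0" "cartan X b a \<le> 0" by (simp_all add: cartan_nonpos)
  moreover have "cartan X a b * cartan X b a = 1" using assms unfolding simple_edge_def by simp
  ultimately show ?thesis using zmult_eq_1_iff by fastforce
qed

text \<open>The multiple bond of a non-simply-laced diagram joins \<open>multiple_bond X\<close> and its successor;
for simply-laced types the value \<open>0\<close> is not a node.\<close>

definition multiple_bond :: "cartan_type \<Rightarrow> nat" where
  "multiple_bond X = (case X of TB n \<Rightarrow> n - 1 | TC n \<Rightarrow> n - 1 | TF4 \<Rightarrow> 2 | TG2 \<Rightarrow> 1 | _ \<Rightarrow> 0)"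

lemma simple_edge_iff_not_multiple_bond:
  "simple_edge X a b \<longleftrightarrow> dynkin_edge X a b \<and> {a, b} \<noteq> {multiple_bond X, Suc (multiple_bond X)}"
proof (cases "dynkin_edge X a b")
  case True
  moreover have "dynkin_edge X b a" using True dynkin_edge_sym by blast
  ultimately show ?thesis
    unfolding simple_edge_def
    by (cases X) (simp_all add: cartan_dynkin_edge multiple_bond_def;
        auto simp: dynkin_edge_def nodes_def rank_def doubleton_eq_iff)+
qed (simp add: simple_edge_def)

lemma dynkin_edge_across_multiple_bond:
  assumes "dynkin_edge X a b" "a \<le> multiple_bond X" "multiple_bond X < b"
  shows "a = multiple_bond X \<and> b = Suc (multiple_bond X)"
  using assms by (cases X) (auto simp: dynkin_edge_def nodes_def rank_def multiple_bond_def)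

lemma simple_edge_le_multiple_bond:
  assumes "simple_edge X a b" "a \<le> multiple_bond X"
  shows "b \<le> multiple_bond X"
  using assms dynkin_edge_across_multiple_bond[of X a b]
  by (force simp: simple_edge_iff_not_multiple_bond)

lemma dynkin_edge_in_simple_component:
  assumes "dynkin_edge X a b" "(simple_edge X)\<^sup>*\<^sup>* a b"
  shows "simple_edge X a b"
proof (rule ccontr)
  let ?m = "multiple_bond X"
  assume "\<not> simple_edge X a b"
  then have ab: "{a, b} = {?m, Suc ?m}"
    using assms(1) simple_edge_iff_not_multiple_bond by blast
  have stays_below: "v \<le> ?m" if "(simple_edge X)\<^sup>*\<^sup>* u v" "u \<le> ?m" for u v
    using that by (induction rule: rtranclp_induct) (auto intro: simple_edge_le_multiple_bond)
  have "(simple_edge X)\<^sup>*\<^sup>* b a"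
    using assms(2) symp_rtranclp[OF symp_simple_edge] by (blast dest: sympD)
  then show False
    using ab assms(2) stays_below[of ?m "Suc ?m"] by (auto simp: doubleton_eq_iff)
qed

lemma cartan_in_simple_component:
  assumes "(simple_edge X)\<^sup>*\<^sup>* a b" "a \<noteq> b"
  shows "cartan X a b = (if simple_edge X a b then -1 else 0)"
  using assms cartan_simple_edge cartan_eq_0_if_not_dynkin_edge dynkin_edge_in_simple_component by metis

lemma simple_component_nodes:
  "(simple_edge X)\<^sup>*\<^sup>* a b \<Longrightarrow> a \<in> nodes X \<Longrightarrow> b \<in> nodes X"
  by (induction rule: rtranclp_induct) (auto dest: simple_edge_nodes)

section \<open>Sums of distinct simple roots\<close>

definition root_sum :: "cartan_type \<Rightarrow> nat set \<Rightarrow> nat \<Rightarrow> int" where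
  "root_sum X S = (\<lambda>i. \<Sum>j\<in>S. simple_root X j i)"

lemma root_sum_apply: "root_sum X S q = (if q \<in> nodes X then \<Sum>p\<in>S. cartan X q p else 0)"
  unfolding root_sum_def simple_root_def by simp

lemma root_sum_nonpos: "q \<notin> S \<Longrightarrow> root_sum X S q \<le> 0"
  unfolding root_sum_apply by (auto intro: sum_nonpos cartan_nonpos)

lemma root_sum_simple_component:
  assumes "finite S" "q \<in> S" "q \<in> nodes X" "\<forall>p\<in>S. (simple_edge X)\<^sup>*\<^sup>* q p"
  shows "root_sum X S q = 2 - int (card {p \<in> S. simple_edge X q p})"
proof -
  have "root_sum X S q = cartan X q q + (\<Sum>p\<in>S - {q}. cartan X q p)"
    using assms(1-3) by (simp add: root_sum_apply sum.remove)
  also have "(\<Sum>p\<in>S - {q}. cartan X q p) = (\<Sum>p\<in>S - {q}. if simple_edge X q p then -1 else 0)"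
    using assms(4) cartan_in_simple_component by (intro sum.cong) auto
  also have "\<dots> = - int (card {p \<in> S - {q}. simple_edge X q p})"
    using assms(1) by (simp add: sum.If_cases Int_def)
  also have "{p \<in> S - {q}. simple_edge X q p} = {p \<in> S. simple_edge X q p}"
    using irreflp_simple_edge by (auto dest: irreflpD)
  finally show ?thesis using cartan_self[OF assms(3)] by simp
qed

lemma finite_nodes: "finite (nodes X)"
  unfolding nodes_def by simp

lemma sum_simple_roots_split:
  "S \<subseteq> nodes X \<Longrightarrow> sum_simple_roots X = root_sum X S + root_sum X (nodes X - S)"
  unfolding sum_simple_roots_def root_sum_def
  by (simp add: fun_eq_iff sum.subset_diff[OF _ finite_nodes] add.commute)

lemma wle_refl: "wle X f f"
  unfolding wle_def by (intro exI[of _ "\<lambda>_. 0"]) (simp add: fun_eq_iff)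

lemma wle_trans: "wle X f g \<Longrightarrow> wle X g h \<Longrightarrow> wle X f h"
  unfolding wle_def
proof (elim exE)
  fix c d :: "nat \<Rightarrow> nat"
  assume "g - f = (\<lambda>i. \<Sum>j\<in>nodes X. int (c j) * simple_root X j i)"
    and "h - g = (\<lambda>i. \<Sum>j\<in>nodes X. int (d j) * simple_root X j i)"
  then have "h - f = (\<lambda>i. \<Sum>j\<in>nodes X. int (c j + d j) * simple_root X j i)"
    by (simp add: fun_eq_iff algebra_simps sum.distrib)
  then show "\<exists>e. h - f = (\<lambda>i. \<Sum>j\<in>nodes X. int (e j) * simple_root X j i)"
    by (rule exI[of _ "\<lambda>j. c j + d j"])
qed

lemma wle_add_right: "wle X f g \<Longrightarrow> wle X (f + h) (g + h)"
  unfolding wle_def by simp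

lemma wle_diff_root_sum:
  assumes "S \<subseteq> nodes X"
  shows "wle X (f - root_sum X S) f"
proof -
  have "root_sum X S i = (\<Sum>j\<in>nodes X. int (if j \<in> S then 1 else 0) * simple_root X j i)" for i
  proof -
    have "root_sum X S i = (\<Sum>j\<in>nodes X. if j \<in> S then simple_root X j i else 0)"
      using assms finite_nodes unfolding root_sum_def by (simp add: sum.If_cases Int_absorb1)
    also have "\<dots> = (\<Sum>j\<in>nodes X. int (if j \<in> S then 1 else 0) * simple_root X j i)"
      by (intro sum.cong) auto
    finally show ?thesis .
  qed
  then show ?thesis
    unfolding wle_def by (intro exI[of _ "\<lambda>j. if j \<in> S then 1 else 0"]) (simp add: fun_eq_iff)
qed

section \<open>Low triples\<close>

definition root_sum_minimal :: "cartan_type \<Rightarrow> (nat \<Rightarrow> int) \<Rightarrow> bool" where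
  "root_sum_minimal X la \<longleftrightarrow>
     (\<forall>S \<subseteq> nodes X. la - root_sum X S \<in> dominant X \<longrightarrow> root_sum X S = 0)"

lemma low_triple_root_sum_minimal:
  assumes "low_triple X la mu nu"
  shows "root_sum_minimal X la" "root_sum_minimal X mu"
proof -
  have dom: "la \<in> dominant X" "mu \<in> dominant X"
    and minimal: "\<And>la' mu'. la' \<in> dominant X \<Longrightarrow> mu' \<in> dominant X \<Longrightarrow>
        wle X la' la \<Longrightarrow> wle X mu' mu \<Longrightarrow> wle X nu (la' + mu') \<Longrightarrow> la' = la \<and> mu' = mu"
    and low: "wle X (nu + sum_simple_roots X) (la + mu)"
    using assms unfolding low_triple_def by auto
  have below: "wle X nu (la + mu - root_sum X S)" if "S \<subseteq> nodes X" for S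
  proof -
    have "wle X nu (nu + root_sum X (nodes X - S))"
      using wle_diff_root_sum[of "nodes X - S" X "nu + root_sum X (nodes X - S)"] by simp
    moreover have "wle X (nu + root_sum X (nodes X - S)) (la + mu - root_sum X S)"
      using wle_add_right[OF low, of "- root_sum X S"] sum_simple_roots_split[OF that]
      by (simp add: algebra_simps)
    ultimately show ?thesis by (rule wle_trans)
  qed
  show "root_sum_minimal X la"
    unfolding root_sum_minimal_def
  proof (intro allI impI)
    fix S assume "S \<subseteq> nodes X" "la - root_sum X S \<in> dominant X"
    with below[of S] have "la - root_sum X S = la"
      using minimal dom wle_diff_root_sum wle_refl by (simp add: diff_add_eq)
    then show "root_sum X S = 0" by simp
  qed
  show "root_sum_minimal X mu"
    unfolding root_sum_minimal_def
  proof (intro allI impI)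
    fix S assume "S \<subseteq> nodes X" "mu - root_sum X S \<in> dominant X"
    with below[of S] have "mu - root_sum X S = mu"
      using minimal dom wle_diff_root_sum wle_refl by (simp add: add_diff_eq)
    then show "root_sum X S = 0" by simp
  qed
qed

lemma dominant_diff_root_sum:
  assumes "la \<in> dominant X" "\<And>q. q \<in> nodes X \<Longrightarrow> root_sum X S q \<le> la q"
  shows "la - root_sum X S \<in> dominant X"
  using assms unfolding dominant_def weights_def by (auto simp: root_sum_apply)

lemma dominant_outside_nodes: "la \<in> dominant X \<Longrightarrow> q \<notin> nodes X \<Longrightarrow> la q = 0"
  unfolding dominant_def weights_def by auto

lemma dominant_nonneg: "la \<in> dominant X \<Longrightarrow> q \<in> nodes X \<Longrightarrow> 0 \<le> la q"
  unfolding dominant_def by auto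

lemma root_sum_minimal_le_1:
  assumes "la \<in> dominant X" "root_sum_minimal X la" "q \<in> nodes X"
  shows "la q \<le> 1"
proof (rule ccontr)
  assume "\<not> la q \<le> 1"
  have "root_sum X {q} p \<le> la p" if "p \<in> nodes X" for p
  proof (cases "p = q")
    case True
    with \<open>\<not> la q \<le> 1\<close> that show ?thesis by (simp add: root_sum_apply cartan_self)
  next
    case False
    then have "root_sum X {q} p \<le> 0" by (simp add: root_sum_nonpos)
    with dominant_nonneg[OF assms(1) that] show ?thesis by simp
  qed
  then have "la - root_sum X {q} \<in> dominant X"
    by (rule dominant_diff_root_sum[OF assms(1)])
  then have "root_sum X {q} = 0" using assms(2,3) unfolding root_sum_minimal_def by blast
  then have "root_sum X {q} q = 0" by simp
  then show False using assms(3) by (simp add: root_sum_apply cartan_self)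
qed

lemma root_sum_minimal_unique_in_simple_component:
  assumes dom: "la \<in> dominant X" and minimal: "root_sum_minimal X la"
    and linked: "(simple_edge X)\<^sup>*\<^sup>* i j" and "1 \<le> la i" "1 \<le> la j"
  shows "i = j"
proof (rule ccontr)
  assume "i \<noteq> j"
  obtain vs where shortest: "shortest_walk (simple_edge X) i j vs"
    using shortest_walk_exists[OF linked] by blast
  then have walk: "walk (simple_edge X) i j vs" unfolding shortest_walk_def by simp
  define S where "S = set vs"
  have "i \<in> S" "j \<in> S" using walk unfolding walk_def S_def by auto
  have "i \<in> nodes X" using dom \<open>1 \<le> la i\<close> dominant_outside_nodes by fastforce
  have from_i: "(simple_edge X)\<^sup>*\<^sup>* i p" if "p \<in> S" for p
    using walk successively_rtranclp that unfolding walk_def S_def by metis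
  then have "S \<subseteq> nodes X" using simple_component_nodes \<open>i \<in> nodes X\<close> by blast
  have linked_in_S: "(simple_edge X)\<^sup>*\<^sup>* q p" if "q \<in> S" "p \<in> S" for q p
    using from_i[OF that(1)] from_i[OF that(2)] symp_rtranclp[OF symp_simple_edge]
    by (metis rtranclp_trans sympD)
  have value_in_S: "root_sum X S q = 2 - int (card {p \<in> S. simple_edge X q p})"
    if "q \<in> S" for q
    using root_sum_simple_component[of S q X] that linked_in_S \<open>S \<subseteq> nodes X\<close>
    unfolding S_def by auto
  have "root_sum X S i = 1" \<comment> \<open>\<open>i\<close> has a single neighbour on a shortest walk, so \<open>\<alpha>_S \<noteq> 0\<close>\<close>
    using value_in_S[OF \<open>i \<in> S\<close>]
      shortest_walk_start_neighbours[OF irreflp_simple_edge shortest \<open>i \<noteq> j\<close>]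
    unfolding S_def by simp
  have "root_sum X S q \<le> la q" if "q \<in> nodes X" for q
  proof -
    consider "q = i" | "q = j" | "q \<in> S" "q \<noteq> i" "q \<noteq> j" | "q \<notin> S" by blast
    then show ?thesis
    proof cases
      case 1
      with \<open>root_sum X S i = 1\<close> \<open>1 \<le> la i\<close> show ?thesis by simp
    next
      case 2
      with value_in_S[OF \<open>j \<in> S\<close>] \<open>1 \<le> la j\<close> show ?thesis
        using walk_end_neighbour[OF symp_simple_edge walk \<open>i \<noteq> j\<close>] unfolding S_def by simp
    next
      case 3
      with value_in_S[of q] distinct_walk_inner_neighbours[OF symp_simple_edge walk
          shortest_walk_distinct[OF shortest], of q]
      have "root_sum X S q \<le> 0" unfolding S_def by simp
      with dominant_nonneg[OF dom that] show ?thesis by simp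
    next
      case 4
      with dominant_nonneg[OF dom that] root_sum_nonpos[of q S X] show ?thesis by simp
    qed
  qed
  then have "la - root_sum X S \<in> dominant X" by (rule dominant_diff_root_sum[OF dom])
  then have "root_sum X S = 0"
    using minimal \<open>S \<subseteq> nodes X\<close> unfolding root_sum_minimal_def by blast
  with \<open>root_sum X S i = 1\<close> show False by simp
qed

lemma root_sum_minimal_sum_le_1:
  assumes "la \<in> dominant X" "root_sum_minimal X la"
    and "A \<subseteq> nodes X" "\<And>i j. i \<in> A \<Longrightarrow> j \<in> A \<Longrightarrow> (simple_edge X)\<^sup>*\<^sup>* i j"
  shows "sum la A \<le> 1"
proof (cases "\<exists>i\<in>A. 1 \<le> la i")
  case True
  then obtain i where "i \<in> A" "1 \<le> la i" by blast
  have "la j = 0" if "j \<in> A - {i}" for j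
  proof (rule ccontr)
    assume "la j \<noteq> 0"
    with dominant_nonneg[OF assms(1)] that assms(3) have "1 \<le> la j" by force
    with that \<open>i \<in> A\<close> \<open>1 \<le> la i\<close> show False
      using root_sum_minimal_unique_in_simple_component[OF assms(1,2) assms(4)] by blast
  qed
  then have "sum la A = la i"
    using \<open>i \<in> A\<close> assms(3) finite_nodes by (simp add: sum.remove finite_subset)
  then show ?thesis using root_sum_minimal_le_1 assms(1,2,3) \<open>i \<in> A\<close> by auto
next
  case False
  then have "la i = 0" if "i \<in> A" for i
    using that dominant_nonneg[OF assms(1)] assms(3) by force
  then show ?thesis by simp
qed

lemma low_triple_positive_part_le_2:
  assumes "low_triple X la mu nu" "A \<subseteq> nodes X"
    and "\<And>i j. i \<in> A \<Longrightarrow> j \<in> A \<Longrightarrow> (simple_edge X)\<^sup>*\<^sup>* i j"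
  shows "(\<Sum>i\<in>{i \<in> A. (la + mu - nu) i > 0}. (la + mu - nu) i) \<le> 2"
proof -
  let ?B = "{i \<in> A. (la + mu - nu) i > 0}"
  have dom: "la \<in> dominant X" "mu \<in> dominant X" "nu \<in> dominant X"
    using assms(1) unfolding low_triple_def by auto
  have "?B \<subseteq> nodes X" using assms(2) by auto
  have "(\<Sum>i\<in>?B. (la + mu - nu) i) \<le> (\<Sum>i\<in>?B. la i + mu i)"
    using dominant_nonneg[OF dom(3)] \<open>?B \<subseteq> nodes X\<close> by (intro sum_mono) auto
  also have "\<dots> = sum la ?B + sum mu ?B" by (rule sum.distrib)
  also have "\<dots> \<le> 1 + 1"
  proof (rule add_mono)
    have linked: "(simple_edge X)\<^sup>*\<^sup>* i j" if "i \<in> ?B" "j \<in> ?B" for i j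
      using that assms(3) by blast
    show "sum la ?B \<le> 1" "sum mu ?B \<le> 1"
      using root_sum_minimal_sum_le_1[OF _ _ \<open>?B \<subseteq> nodes X\<close> linked] dom
        low_triple_root_sum_minimal[OF assms(1)] by blast+
  qed
  finally show ?thesis by simp
qed

theorem mainTheorem14:
  fixes X :: cartan_type and la mu nu :: "nat \<Rightarrow> int"
  assumes "valid_type X"
    and "low_triple X la mu nu"
  shows "ht0plus X (la + mu - nu) \<le> 2"
proof (cases "X = TF4")
  case True
  have "(\<Sum>i\<in>{i \<in> B. (la + mu - nu) i > 0}. (la + mu - nu) i) \<le> 2"
    if "B = {1, 2} \<or> B = {3, 4}" for B :: "nat set"
  proof (rule low_triple_positive_part_le_2[OF assms(2)])
    show "B \<subseteq> nodes X" using that True by (auto simp: nodes_def rank_def)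
    have "simple_edge TF4 1 2" "simple_edge TF4 3 4"
      by (simp_all add: simple_edge_iff_not_multiple_bond multiple_bond_def
          dynkin_edge_def nodes_def rank_def doubleton_eq_iff)
    then show "(simple_edge X)\<^sup>*\<^sup>* i j" if "i \<in> B" "j \<in> B" for i j
      using that \<open>B = {1, 2} \<or> B = {3, 4}\<close> True symp_simple_edge[of TF4] by (auto dest: sympD)
  qed
  from this[of "{1, 2}"] this[of "{3, 4}"] show ?thesis
    using True unfolding ht0plus_def by simp
next
  case False
  have "(simple_edge X)\<^sup>*\<^sup>* i j" if "i \<in> I0 X" "j \<in> I0 X" for i j
    using that symp_rtranclp[OF symp_simple_edge] unfolding I0_def
    by (auto simp: rtranclp_rtrancl_eq[symmetric] dest: sympD intro: rtranclp_trans)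
  moreover have "I0 X \<subseteq> nodes X" unfolding I0_def by auto
  ultimately show ?thesis
    using False low_triple_positive_part_le_2[OF assms(2)] unfolding ht0plus_def by simp
qed

end
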